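(* Let $r\in N$ with $r^2=-2$, and let $R_r\subset N$ be the sublattice generated by $r$ and $\rho(r)$ (so $R_r\cong A_1\oplus A_1$). Then the orthogonal complement of $R_r$ in $N$ is isomorphic to $U\oplus U(2)\oplus D_4\oplus A_1^{\oplus2}$, and $(r+\rho(r))/2\in N^*$.
   Context: Lattices: $U$ has Gram matrix $\begin{pmatrix}0&1\\1&0\end{pmatrix}$; $A_1,D_4$ are negative definite root lattices; $U(2)$ is $U$ with form multiplied by $2$. $N=U\oplus U(2)\oplus D_4\oplus D_4$ and $N^*$ its dual. $\rho=\rho_1\oplus\rho_0\oplus\rho_0\in O(N)$, where, realizing $D_4=\{x\in\mathbb Z^4:x_1+\dots+x_4\equiv0\bmod2\}$ with the negative standard inner product, $\rho_0(x_1,x_2,x_3,x_4)=(x_2,-x_1,x_4,-x_3)$, and for standard hyperbolic bases $e,f$ of $U$ and $e',f'$ of $U(2)$, $\rho_1(e)=-e-e'$, $\rho_1(f)=f-f'$, $\rho_1(e')=e'+2e$, $\rho_1(f')=2f-f'$. $\rho$ has order $4$ and acts trivially on $N^*/N$. *)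

theory Defs
  imports Complex_Main
begin

text \<open>Lattice vectors are modelled as coordinate vectors  nat => 'a  that vanish
outside a finite index range.  For N = U + U(2) + D4 + D4 the coordinates are:
0,1 = coefficients of e,f (hyperbolic basis of U); 2,3 = coefficients of e',f'
(hyperbolic basis of U(2)); 4..7 = first D4 (inside Z^4); 8..11 = second D4.\<close>

definition supp_in :: "nat \<Rightarrow> (nat \<Rightarrow> 'a::zero) \<Rightarrow> bool" where
  "supp_in n x \<longleftrightarrow> (\<forall>i\<ge>n. x i = 0)"

definition bN :: "(nat \<Rightarrow> 'a::comm_ring_1) \<Rightarrow> (nat \<Rightarrow> 'a) \<Rightarrow> 'a" where
  "bN x y = x 0 * y 1 + x 1 * y 0 + 2 * (x 2 * y 3 + x 3 * y 2)
            - (\<Sum>i\<in>{4..<12}. x i * y i)"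

definition N_lat :: "(nat \<Rightarrow> int) set" where
  "N_lat = {x. supp_in 12 x \<and> even (x 4 + x 5 + x 6 + x 7) \<and> even (x 8 + x 9 + x 10 + x 11)}"

definition N_dual :: "(nat \<Rightarrow> rat) set" where
  "N_dual = {v. supp_in 12 v \<and> (\<forall>x\<in>N_lat. bN v (\<lambda>i. of_int (x i)) \<in> \<int>)}"

definition rho :: "(nat \<Rightarrow> int) \<Rightarrow> (nat \<Rightarrow> int)" where
  "rho x = (\<lambda>i.
     if i = 0 then - x 0 + 2 * x 2
     else if i = 1 then x 1 + 2 * x 3
     else if i = 2 then - x 0 + x 2
     else if i = 3 then - x 1 - x 3
     else if i = 4 then x 5
     else if i = 5 then - x 4
     else if i = 6 then x 7
     else if i = 7 then - x 6
     else if i = 8 then x 9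
     else if i = 9 then - x 8
     else if i = 10 then x 11
     else if i = 11 then - x 10
     else 0)"

definition R_lat :: "(nat \<Rightarrow> int) \<Rightarrow> (nat \<Rightarrow> int) set" where
  "R_lat r = {(\<lambda>i. m * r i + n * rho r i) | m n. True}"

definition orth_compl :: "(nat \<Rightarrow> int) set \<Rightarrow> (nat \<Rightarrow> int) set" where
  "orth_compl S = {x \<in> N_lat. \<forall>y\<in>S. bN x y = 0}"

text \<open>Model of A1 + A1 (A1 negative definite, Gram (-2)) in Z^2.\<close>
definition A1A1_lat :: "(nat \<Rightarrow> int) set" where
  "A1A1_lat = {x. supp_in 2 x}"

definition bA1A1 :: "(nat \<Rightarrow> int) \<Rightarrow> (nat \<Rightarrow> int) \<Rightarrow> int" where
  "bA1A1 x y = - 2 * x 0 * y 0 - 2 * x 1 * y 1"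

text \<open>Model of U + U(2) + D4 + A1 + A1 in Z^10: coordinates 0,1 (U), 2,3 (U(2)),
4..7 (D4 in Z^4), 8 and 9 (the two A1's).\<close>
definition M_lat :: "(nat \<Rightarrow> int) set" where
  "M_lat = {x. supp_in 10 x \<and> even (x 4 + x 5 + x 6 + x 7)}"

definition bM :: "(nat \<Rightarrow> int) \<Rightarrow> (nat \<Rightarrow> int) \<Rightarrow> int" where
  "bM x y = x 0 * y 1 + x 1 * y 0 + 2 * (x 2 * y 3 + x 3 * y 2)
            - (\<Sum>i\<in>{4..<8}. x i * y i) - 2 * x 8 * y 8 - 2 * x 9 * y 9"

definition lattice_iso ::
  "(nat \<Rightarrow> int) set \<Rightarrow> ((nat \<Rightarrow> int) \<Rightarrow> (nat \<Rightarrow> int) \<Rightarrow> int) \<Rightarrow>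
   (nat \<Rightarrow> int) set \<Rightarrow> ((nat \<Rightarrow> int) \<Rightarrow> (nat \<Rightarrow> int) \<Rightarrow> int) \<Rightarrow> bool" where
  "lattice_iso L1 B1 L2 B2 \<longleftrightarrow>
     (\<exists>f. bij_betw f L1 L2 \<and>
          (\<forall>x\<in>L1. \<forall>y\<in>L1. f (\<lambda>i. x i + y i) = (\<lambda>i. f x i + f y i) \<and> B2 (f x) (f y) = B1 x y))"

end

theory Submission
  imports Defs
begin

text \<open>Since rho squares to -1, N is a Hermitian lattice over the Gaussian integers, and the
  isometries of N commuting with rho act transitively on its roots.  Write alpha and beta for the
  Gaussian coordinates of the U + U(2) component of a root and descend on |beta|^2: an Eichler
  transformation, which fixes beta, makes the D4 + D4 component short; a shear of U + U(2) then
  makes the imaginary part of (1 + i) alpha conj(beta) small, and the root condition bounds its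
  real part, so |alpha| < |beta|; swapping alpha and beta continues the descent down to
  |beta| = 1, where the root is moved to the standard root -e + f - e'.  Hence the complement of
  R_r is isometric to that of the root (1, 1) of the second D4, which is U + U(2) + D4 + A1 + A1 in
  evident coordinates.  Finally (r + rho r, x) is even for every x in N, by a parity computation.\<close>

lemma sum_atLeastLessThan_4_12:
  "(\<Sum>j\<in>{4::nat..<12}. f j) = f 4 + f 5 + f 6 + f 7 + f 8 + f 9 + f 10 + (f 11 :: 'a::comm_monoid_add)"
  by (simp add: numeral_eq_Suc atLeastLessThanSuc add_ac)

lemma bN_expand: "bN x y = x 0 * y 1 + x 1 * y 0 + 2 * (x 2 * y 3 + x 3 * y 2)
   - (x 4 * y 4 + x 5 * y 5 + x 6 * y 6 + x 7 * y 7 + x 8 * y 8 + x 9 * y 9 + x 10 * y 10 + x 11 * y 11)"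
  by (simp add: bN_def sum_atLeastLessThan_4_12 algebra_simps)

lemma bN_sym: "bN x y = bN y x"
  by (simp add: bN_expand algebra_simps)

lemma bN_lincomb_left: "bN (\<lambda>i. m * a i + n * b i) z = m * bN a z + n * bN b z"
  by (simp add: bN_expand algebra_simps)

lemma bN_lincomb_right: "bN z (\<lambda>i. m * a i + n * b i) = m * bN z a + n * bN z b"
  by (simp add: bN_expand algebra_simps)

lemma nat_cases_12:
  assumes "\<And>i. i \<ge> 12 \<Longrightarrow> P i" "P 0" "P 1" "P 2" "P 3" "P 4" "P 5" "P 6" "P 7" "P 8" "P 9" "P 10" "P 11"
  shows "P (i::nat)"
proof -
  have "i \<ge> 12 \<or> i = 0 \<or> i = 1 \<or> i = 2 \<or> i = 3 \<or> i = 4 \<or> i = 5 \<or> i = 6 \<or> i = 7 \<or> i = 8 \<or> i = 9 \<or> i = 10 \<or> i = 11"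
    by presburger
  then show ?thesis using assms by auto
qed

lemma N_latI:
  "(\<And>i. i \<ge> 12 \<Longrightarrow> x i = 0) \<Longrightarrow> even (x 4 + x 5 + x 6 + x 7) \<Longrightarrow> even (x 8 + x 9 + x 10 + x 11)
   \<Longrightarrow> x \<in> N_lat"
  by (simp add: N_lat_def supp_in_def)

lemma N_latD:
  assumes "x \<in> N_lat"
  shows "\<And>i. i \<ge> 12 \<Longrightarrow> x i = 0" "even (x 4 + x 5 + x 6 + x 7)" "even (x 8 + x 9 + x 10 + x 11)"
  using assms by (auto simp: N_lat_def supp_in_def)

definition vadd :: "(nat \<Rightarrow> int) \<Rightarrow> (nat \<Rightarrow> int) \<Rightarrow> (nat \<Rightarrow> int)" where
  "vadd x y = (\<lambda>i. x i + y i)"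

definition vneg :: "(nat \<Rightarrow> int) \<Rightarrow> (nat \<Rightarrow> int)" where
  "vneg x = (\<lambda>i. - x i)"

lemma vadd_in_N:
  assumes x: "x \<in> N_lat" and y: "y \<in> N_lat"
  shows "vadd x y \<in> N_lat"
proof (rule N_latI)
  show "vadd x y i = 0" if "i \<ge> 12" for i using N_latD(1)[OF x that] N_latD(1)[OF y that] by (simp add: vadd_def)
  have "vadd x y 4 + vadd x y 5 + vadd x y 6 + vadd x y 7 = (x 4 + x 5 + x 6 + x 7) + (y 4 + y 5 + y 6 + y 7)"
    by (simp add: vadd_def)
  then show "even (vadd x y 4 + vadd x y 5 + vadd x y 6 + vadd x y 7)" using N_latD(2)[OF x] N_latD(2)[OF y] by simp
  have "vadd x y 8 + vadd x y 9 + vadd x y 10 + vadd x y 11 = (x 8 + x 9 + x 10 + x 11) + (y 8 + y 9 + y 10 + y 11)"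
    by (simp add: vadd_def)
  then show "even (vadd x y 8 + vadd x y 9 + vadd x y 10 + vadd x y 11)" using N_latD(3)[OF x] N_latD(3)[OF y] by simp
qed

lemma rho_in_N:
  assumes "x \<in> N_lat"
  shows "rho x \<in> N_lat"
proof (rule N_latI)
  show "\<And>i. 12 \<le> i \<Longrightarrow> rho x i = 0" by (simp add: rho_def)
  have "rho x 4 + rho x 5 + rho x 6 + rho x 7 = (x 4 + x 5 + x 6 + x 7) - 2 * (x 4 + x 6)" by (simp add: rho_def)
  then show "even (rho x 4 + rho x 5 + rho x 6 + rho x 7)" using N_latD(2)[OF assms] by (metis dvd_diff dvd_triv_left)
  have "rho x 8 + rho x 9 + rho x 10 + rho x 11 = (x 8 + x 9 + x 10 + x 11) - 2 * (x 8 + x 10)" by (simp add: rho_def)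
  then show "even (rho x 8 + rho x 9 + rho x 10 + rho x 11)" using N_latD(3)[OF assms] by (metis dvd_diff dvd_triv_left)
qed

lemma rho_rho_apply: "rho (rho x) i = (if i < 12 then - x i else 0)"
  by (rule nat_cases_12[of _ i]) (simp_all add: rho_def)

lemma rho_vadd: "rho (vadd x y) = vadd (rho x) (rho y)"
  by (rule ext, rule nat_cases_12) (simp_all add: rho_def vadd_def)

lemma bN_rho_rho: "bN (rho x) (rho y) = bN x y"
  by (simp add: bN_expand rho_def algebra_simps)

lemma bN_rho_self: "bN x (rho x) = 0"
  by (simp add: bN_expand rho_def algebra_simps)

section \<open>Isometries of N commuting with rho\<close>

definition rho_isometry :: "((nat \<Rightarrow> int) \<Rightarrow> (nat \<Rightarrow> int)) \<Rightarrow> bool" where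
  "rho_isometry g \<longleftrightarrow> bij_betw g N_lat N_lat
     \<and> (\<forall>x\<in>N_lat. \<forall>y\<in>N_lat. g (vadd x y) = vadd (g x) (g y))
     \<and> (\<forall>x\<in>N_lat. \<forall>y\<in>N_lat. bN (g x) (g y) = bN x y)
     \<and> (\<forall>x\<in>N_lat. g (rho x) = rho (g x))"

lemma rho_isometryI:
  assumes "\<And>x. x \<in> N_lat \<Longrightarrow> g x \<in> N_lat"
    and "\<And>x. x \<in> N_lat \<Longrightarrow> h x \<in> N_lat"
    and "\<And>x. x \<in> N_lat \<Longrightarrow> h (g x) = x"
    and "\<And>x. x \<in> N_lat \<Longrightarrow> g (h x) = x"
    and "\<And>x y. x \<in> N_lat \<Longrightarrow> y \<in> N_lat \<Longrightarrow> g (vadd x y) = vadd (g x) (g y)"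
    and "\<And>x y. x \<in> N_lat \<Longrightarrow> y \<in> N_lat \<Longrightarrow> bN (g x) (g y) = bN x y"
    and "\<And>x. x \<in> N_lat \<Longrightarrow> g (rho x) = rho (g x)"
  shows "rho_isometry g"
  unfolding rho_isometry_def using assms by (auto intro!: bij_betw_byWitness[where f'=h])

lemma rho_isometry_bij: "rho_isometry g \<Longrightarrow> bij_betw g N_lat N_lat"
  unfolding rho_isometry_def by auto

lemma rho_isometry_in_N: "rho_isometry g \<Longrightarrow> x \<in> N_lat \<Longrightarrow> g x \<in> N_lat"
  unfolding rho_isometry_def bij_betw_def by auto

lemma rho_isometry_vadd: "rho_isometry g \<Longrightarrow> x \<in> N_lat \<Longrightarrow> y \<in> N_lat \<Longrightarrow> g (vadd x y) = vadd (g x) (g y)"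
  unfolding rho_isometry_def by auto

lemma rho_isometry_bN: "rho_isometry g \<Longrightarrow> x \<in> N_lat \<Longrightarrow> y \<in> N_lat \<Longrightarrow> bN (g x) (g y) = bN x y"
  unfolding rho_isometry_def by auto

lemma rho_isometry_commute_rho: "rho_isometry g \<Longrightarrow> x \<in> N_lat \<Longrightarrow> g (rho x) = rho (g x)"
  unfolding rho_isometry_def by auto

lemma rho_isometry_comp:
  assumes f: "rho_isometry f" and g: "rho_isometry g"
  shows "rho_isometry (f \<circ> g)"
  unfolding rho_isometry_def
proof (intro conjI ballI)
  show "bij_betw (f \<circ> g) N_lat N_lat"
    using rho_isometry_bij[OF f] rho_isometry_bij[OF g] bij_betw_trans by blast
  fix x y assume x: "x \<in> N_lat" and y: "y \<in> N_lat"
  show "(f \<circ> g) (vadd x y) = vadd ((f \<circ> g) x) ((f \<circ> g) y)"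
    using x y by (simp add: rho_isometry_vadd[OF g] rho_isometry_vadd[OF f] rho_isometry_in_N[OF g])
  show "bN ((f \<circ> g) x) ((f \<circ> g) y) = bN x y"
    using x y by (simp add: rho_isometry_bN[OF g] rho_isometry_bN[OF f] rho_isometry_in_N[OF g])
next
  fix x assume x: "x \<in> N_lat"
  show "(f \<circ> g) (rho x) = rho ((f \<circ> g) x)"
    using x by (simp add: rho_isometry_commute_rho[OF g] rho_isometry_commute_rho[OF f] rho_isometry_in_N[OF g])
qed

lemma rho_isometry_inv:
  assumes g: "rho_isometry g"
  shows "rho_isometry (inv_into N_lat g)"
proof -
  let ?h = "inv_into N_lat g"
  have bij: "bij_betw g N_lat N_lat" using rho_isometry_bij[OF g] .
  have hN: "?h x \<in> N_lat" if "x \<in> N_lat" for x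
    using bij that by (metis bij_betw_def inv_into_into)
  have gh: "g (?h x) = x" if "x \<in> N_lat" for x
    using bij_betw_inv_into_right[OF bij that] .
  have hg: "?h (g x) = x" if "x \<in> N_lat" for x
    using bij_betw_inv_into_left[OF bij that] .
  show ?thesis
  proof (rule rho_isometryI[where h = g])
    fix x y assume x: "x \<in> N_lat" and y: "y \<in> N_lat"
    show "?h x \<in> N_lat" "g x \<in> N_lat" "g (?h x) = x" "?h (g x) = x"
      using hN gh hg rho_isometry_in_N[OF g] x by auto
    have "g (vadd (?h x) (?h y)) = vadd x y"
      using rho_isometry_vadd[OF g hN[OF x] hN[OF y]] gh x y by simp
    then show "?h (vadd x y) = vadd (?h x) (?h y)"
      using hg[OF vadd_in_N[OF hN[OF x] hN[OF y]]] by simp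
    show "bN (?h x) (?h y) = bN x y"
      using rho_isometry_bN[OF g hN[OF x] hN[OF y]] gh x y by simp
  next
    fix x assume x: "x \<in> N_lat"
    have "g (rho (?h x)) = rho x" using rho_isometry_commute_rho[OF g hN[OF x]] gh[OF x] by simp
    then show "?h (rho x) = rho (?h x)"
      using hg[OF rho_in_N[OF hN[OF x]]] by simp
  qed
qed

lemma rho_isometry_rho: "rho_isometry rho"
proof (rule rho_isometryI[where h = "\<lambda>x. rho (rho (rho x))"])
  fix x y assume x: "x \<in> N_lat" and y: "y \<in> N_lat"
  show "rho x \<in> N_lat" "rho (rho (rho x)) \<in> N_lat" using rho_in_N x by blast+
  have "rho (rho (rho (rho x))) = x"
    by (rule ext) (use N_latD(1)[OF x] in \<open>simp add: rho_rho_apply\<close>)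
  then show "rho (rho (rho (rho x))) = x" "rho (rho (rho (rho x))) = x" by simp_all
  show "rho (vadd x y) = vadd (rho x) (rho y)" by (rule rho_vadd)
  show "bN (rho x) (rho y) = bN x y" by (rule bN_rho_rho)
qed simp

section \<open>Eichler transformations, shears and the hyperbolic swap\<close>

definition ratv :: "(nat \<Rightarrow> int) \<Rightarrow> (nat \<Rightarrow> rat)" where
  "ratv x = (\<lambda>i. of_int (x i))"

definition rho_rat :: "(nat \<Rightarrow> rat) \<Rightarrow> (nat \<Rightarrow> rat)" where
  "rho_rat x = (\<lambda>i.
     if i = 0 then - x 0 + 2 * x 2
     else if i = 1 then x 1 + 2 * x 3
     else if i = 2 then - x 0 + x 2
     else if i = 3 then - x 1 - x 3
     else if i = 4 then x 5
     else if i = 5 then - x 4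
     else if i = 6 then x 7
     else if i = 7 then - x 6
     else if i = 8 then x 9
     else if i = 9 then - x 8
     else if i = 10 then x 11
     else if i = 11 then - x 10
     else 0)"

lemma ratv_inj: "ratv x = ratv y \<Longrightarrow> x = y"
  by (rule ext) (metis ratv_def of_int_eq_iff)

lemma ratv_rho: "ratv (rho x) = rho_rat (ratv x)"
  by (rule ext, rule nat_cases_12) (simp_all add: ratv_def rho_def rho_rat_def)

lemma ratv_vadd: "ratv (vadd x y) = (\<lambda>i. ratv x i + ratv y i)"
  by (simp add: ratv_def vadd_def)

lemma ratv_vneg: "ratv (vneg x) = (\<lambda>i. - ratv x i)"
  by (simp add: ratv_def vneg_def)

lemma bN_ratv: "bN (ratv x) (ratv y) = of_int (bN x y)"
  by (simp add: bN_expand ratv_def)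

text \<open>The composite of the Eichler transvections along the isotropic plane spanned by e and e',
  with D4 + D4 parameters built from w and rho w so that it commutes with rho.\<close>

definition eichler_rat :: "(nat \<Rightarrow> rat) \<Rightarrow> (nat \<Rightarrow> rat) \<Rightarrow> (nat \<Rightarrow> rat)" where
  "eichler_rat w X = (let rw = rho_rat w;
     k1 = - (\<Sum>j\<in>{4..<12}. X j * w j) / 2;
     k2 = - (\<Sum>j\<in>{4..<12}. X j * rw j) / 2;
     c = (\<Sum>j\<in>{4..<12}. w j ^ 2) / 4 in
     (\<lambda>i. if i = 0 then X 0 - k1 + k2 + c * (X 1 + 2 * X 3)
          else if i = 2 then X 2 + k2 + c * X 3
          else if 4 \<le> i \<and> i < 12 then X i + X 1 * (w i - rw i) / 2 - X 3 * rw i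
          else X i))"

definition shear_rat :: "rat \<Rightarrow> (nat \<Rightarrow> rat) \<Rightarrow> (nat \<Rightarrow> rat)" where
  "shear_rat t X = (\<lambda>i. if i = 0 then X 0 + 2 * t * X 3 else if i = 2 then X 2 - t * X 1 else X i)"

lemma bN_eichler_rat: "bN (eichler_rat w X) (eichler_rat w Y) = bN X Y"
  unfolding bN_expand eichler_rat_def Let_def sum_atLeastLessThan_4_12
  by (simp add: rho_rat_def field_simps) algebra

lemma eichler_rat_rho: "eichler_rat w (rho_rat X) = rho_rat (eichler_rat w X)"
  by (rule ext, rule nat_cases_12)
    (simp_all add: eichler_rat_def Let_def sum_atLeastLessThan_4_12 rho_rat_def field_simps)

lemma eichler_rat_add: "eichler_rat w (\<lambda>i. X i + Y i) = (\<lambda>i. eichler_rat w X i + eichler_rat w Y i)"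
  by (rule ext, rule nat_cases_12)
    (simp_all add: eichler_rat_def Let_def sum_atLeastLessThan_4_12 rho_rat_def field_simps)

lemma eichler_rat_inverse:
  fixes w :: "nat \<Rightarrow> rat"
  defines "c \<equiv> (\<Sum>j\<in>{4..<12}. w j ^ 2) / 4"
  shows "eichler_rat w (eichler_rat (\<lambda>i. - w i) (shear_rat (- c) X)) = X"
    and "eichler_rat (\<lambda>i. - w i) (shear_rat (- c) (eichler_rat w X)) = X"
  unfolding c_def
  by (rule ext, rule nat_cases_12;
      simp add: eichler_rat_def shear_rat_def Let_def sum_atLeastLessThan_4_12 rho_rat_def
        power2_eq_square field_simps; simp add: algebra_simps)+

text \<open>For such parameters the divisions in the integral version eichler are exact.\<close>

definition eichler_param :: "(nat \<Rightarrow> int) \<Rightarrow> bool" where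
  "eichler_param W \<longleftrightarrow> (\<forall>i. (i < 4 \<or> 12 \<le> i) \<longrightarrow> W i = 0) \<and>
     even (W 5 - W 4) \<and> even (W 6 - W 4) \<and> even (W 7 - W 4) \<and>
     even (W 9 - W 8) \<and> even (W 10 - W 8) \<and> even (W 11 - W 8)"

definition eichler :: "(nat \<Rightarrow> int) \<Rightarrow> (nat \<Rightarrow> int) \<Rightarrow> (nat \<Rightarrow> int)" where
  "eichler W x = (let rW = rho W;
     k1 = (- (\<Sum>j\<in>{4..<12}. x j * W j)) div 2;
     k2 = (- (\<Sum>j\<in>{4..<12}. x j * rW j)) div 2;
     c = (\<Sum>j\<in>{4..<12}. W j ^ 2) div 4 in
     (\<lambda>i. if i = 0 then x 0 - k1 + k2 + c * (x 1 + 2 * x 3)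
          else if i = 2 then x 2 + k2 + c * x 3
          else if 4 \<le> i \<and> i < 12 then x i + x 1 * ((W i - rW i) div 2) - x 3 * rW i
          else x i))"

definition shear :: "int \<Rightarrow> (nat \<Rightarrow> int) \<Rightarrow> (nat \<Rightarrow> int)" where
  "shear t x = (\<lambda>i. if i = 0 then x 0 + 2 * t * x 3 else if i = 2 then x 2 - t * x 1 else x i)"

lemma eichler_paramD:
  assumes "eichler_param W"
  shows "\<And>i. i < 4 \<Longrightarrow> W i = 0" "\<And>i. 12 \<le> i \<Longrightarrow> W i = 0"
    "even (W 5 - W 4)" "even (W 6 - W 4)" "even (W 7 - W 4)"
    "even (W 9 - W 8)" "even (W 10 - W 8)" "even (W 11 - W 8)"
  using assms by (auto simp: eichler_param_def)

lemma eichler_param_vneg: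
  assumes "eichler_param W"
  shows "eichler_param (vneg W)"
proof -
  note W = eichler_paramD[OF assms]
  have "even (- W 5 - - W 4)" "even (- W 6 - - W 4)" "even (- W 7 - - W 4)"
    "even (- W 9 - - W 8)" "even (- W 10 - - W 8)" "even (- W 11 - - W 8)"
    using W(3-8) by presburger+
  then show ?thesis using W(1,2) unfolding eichler_param_def vneg_def by auto
qed

lemma even_dot_of_congruent_mod2:
  fixes x4 x5 x6 x7 w4 w5 w6 w7 :: int
  assumes "even (x4 + x5 + x6 + x7)" "even (w5 - w4)" "even (w6 - w4)" "even (w7 - w4)"
  shows "even (x4 * w4 + x5 * w5 + x6 * w6 + x7 * w7)"
proof -
  have "x4 * w4 + x5 * w5 + x6 * w6 + x7 * w7
      = w4 * (x4 + x5 + x6 + x7) + x5 * (w5 - w4) + x6 * (w6 - w4) + x7 * (w7 - w4)"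
    by (simp add: algebra_simps)
  then show ?thesis using assms by simp
qed

lemma four_dvd_sum_sq_of_congruent_mod2:
  fixes w4 w5 w6 w7 :: int
  assumes "even (w5 - w4)" "even (w6 - w4)" "even (w7 - w4)"
  shows "4 dvd (w4^2 + w5^2 + w6^2 + w7^2)"
proof -
  from assms obtain a5 a6 a7 where "w5 - w4 = 2 * a5" "w6 - w4 = 2 * a6" "w7 - w4 = 2 * a7"
    by (meson evenE)
  then have "w5 = w4 + 2 * a5" "w6 = w4 + 2 * a6" "w7 = w4 + 2 * a7" by simp_all
  then have "w4^2 + w5^2 + w6^2 + w7^2 = 4 * (w4^2 + w4 * (a5 + a6 + a7) + a5^2 + a6^2 + a7^2)"
    by (simp add: power2_eq_square algebra_simps)
  then show ?thesis by (metis dvd_triv_left)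
qed

lemma eichler_param_dot_even:
  assumes "x \<in> N_lat" "eichler_param W"
  shows "even (\<Sum>j\<in>{4..<12}. x j * W j)"
proof -
  note x = N_latD[OF assms(1)] and W = eichler_paramD[OF assms(2)]
  have "even (x 4 * W 4 + x 5 * W 5 + x 6 * W 6 + x 7 * W 7)"
    by (rule even_dot_of_congruent_mod2) (use x W in auto)
  moreover have "even (x 8 * W 8 + x 9 * W 9 + x 10 * W 10 + x 11 * W 11)"
    by (rule even_dot_of_congruent_mod2) (use x W in auto)
  ultimately show ?thesis by (simp add: sum_atLeastLessThan_4_12 add.assoc)
qed

lemma eichler_param_dot_rho_even:
  assumes "x \<in> N_lat" "eichler_param W"
  shows "even (\<Sum>j\<in>{4..<12}. x j * rho W j)"
proof -
  note x = N_latD[OF assms(1)] and W = eichler_paramD[OF assms(2)]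
  have "even (x 4 * W 5 + x 5 * (- W 4) + x 6 * W 7 + x 7 * (- W 6))"
    by (rule even_dot_of_congruent_mod2) (use x(2) W(3-5) in presburger)+
  moreover have "even (x 8 * W 9 + x 9 * (- W 8) + x 10 * W 11 + x 11 * (- W 10))"
    by (rule even_dot_of_congruent_mod2) (use x(3) W(6-8) in presburger)+
  ultimately show ?thesis by (simp add: sum_atLeastLessThan_4_12 rho_def add.assoc)
qed

lemma eichler_param_sum_sq_dvd4:
  assumes "eichler_param W"
  shows "4 dvd (\<Sum>j\<in>{4..<12}. W j ^ 2)"
proof -
  note W = eichler_paramD[OF assms]
  have "4 dvd (W 4 ^ 2 + W 5 ^ 2 + W 6 ^ 2 + W 7 ^ 2)"
    by (rule four_dvd_sum_sq_of_congruent_mod2) (use W in auto)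
  moreover have "4 dvd (W 8 ^ 2 + W 9 ^ 2 + W 10 ^ 2 + W 11 ^ 2)"
    by (rule four_dvd_sum_sq_of_congruent_mod2) (use W in auto)
  moreover have "(\<Sum>j\<in>{4..<12}. W j ^ 2)
      = (W 4 ^ 2 + W 5 ^ 2 + W 6 ^ 2 + W 7 ^ 2) + (W 8 ^ 2 + W 9 ^ 2 + W 10 ^ 2 + W 11 ^ 2)"
    by (simp add: sum_atLeastLessThan_4_12 add.assoc)
  ultimately show ?thesis by simp
qed

lemma eichler_param_diff_rho_even:
  assumes "eichler_param W" "4 \<le> i" "i < 12"
  shows "even (W i - rho W i)"
proof -
  have "i = 4 \<or> i = 5 \<or> i = 6 \<or> i = 7 \<or> i = 8 \<or> i = 9 \<or> i = 10 \<or> i = 11" using assms by presburger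
  then show ?thesis using eichler_paramD[OF assms(1)] by (auto simp: rho_def)
qed

lemma of_int_div_exact: "(d::int) dvd a \<Longrightarrow> (of_int (a div d) :: rat) = of_int a / of_int d"
  by (cases "d = 0") (auto elim!: dvdE)

lemma ratv_eichler:
  assumes "x \<in> N_lat" "eichler_param W"
  shows "ratv (eichler W x) = eichler_rat (ratv W) (ratv x)"
proof (rule ext)
  fix i
  have rho_apply: "rho_rat (\<lambda>i. of_int (W i)) j = (of_int (rho W j) :: rat)" for j
    using fun_cong[OF ratv_rho[of W], of j] by (simp add: ratv_def)
  have k1: "(of_int ((- (\<Sum>j\<in>{4..<12}. x j * W j)) div 2) :: rat)
      = - (\<Sum>j\<in>{4..<12}. ratv x j * ratv W j) / 2"
    using of_int_div_exact[of 2 "- (\<Sum>j\<in>{4..<12}. x j * W j)"] eichler_param_dot_even[OF assms]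
    by (simp add: ratv_def)
  have k2: "(of_int ((- (\<Sum>j\<in>{4..<12}. x j * rho W j)) div 2) :: rat)
      = - (\<Sum>j\<in>{4..<12}. ratv x j * rho_rat (ratv W) j) / 2"
    using of_int_div_exact[of 2 "- (\<Sum>j\<in>{4..<12}. x j * rho W j)"] eichler_param_dot_rho_even[OF assms]
    by (simp add: ratv_def rho_apply)
  have c: "(of_int ((\<Sum>j\<in>{4..<12}. W j ^ 2) div 4) :: rat) = (\<Sum>j\<in>{4..<12}. ratv W j ^ 2) / 4"
    using of_int_div_exact[OF eichler_param_sum_sq_dvd4[OF assms(2)]] by (simp add: ratv_def)
  have d: "(of_int ((W i - rho W i) div 2) :: rat) = (ratv W i - rho_rat (ratv W) i) / 2"
    if "4 \<le> i" "i < 12"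
    using of_int_div_exact[OF eichler_param_diff_rho_even[OF assms(2) that]] by (simp add: ratv_def rho_apply)
  show "ratv (eichler W x) i = eichler_rat (ratv W) (ratv x) i"
    unfolding eichler_def eichler_rat_def Let_def using k1 k2 c d rho_apply by (simp add: ratv_def)
qed

lemma ratv_shear: "ratv (shear t x) = shear_rat (of_int t) (ratv x)"
  by (rule ext) (simp add: ratv_def shear_def shear_rat_def)

lemma eichler_in_N:
  assumes x: "x \<in> N_lat" and W: "eichler_param W"
  shows "eichler W x \<in> N_lat"
proof (rule N_latI)
  note E = fun_cong[OF ratv_eichler[OF x W]] and W' = eichler_paramD[OF W]
  show "eichler W x i = 0" if "12 \<le> i" for i using N_latD(1)[OF x that] that by (simp add: eichler_def Let_def)
  have "(of_int (eichler W x 4 + eichler W x 5 + eichler W x 6 + eichler W x 7) :: rat) =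
     of_int ((x 4 + x 5 + x 6 + x 7) + x 1 * (W 4 + W 6) - x 3 * (W 5 - W 4 + W 7 - W 6))"
    using E[of 4] E[of 5] E[of 6] E[of 7] by (simp add: ratv_def eichler_rat_def Let_def rho_rat_def field_simps)
  moreover have "even (W 4 + W 6)" "even (W 5 - W 4 + W 7 - W 6)" using W'(3-5) by presburger+
  ultimately show "even (eichler W x 4 + eichler W x 5 + eichler W x 6 + eichler W x 7)"
    using N_latD(2)[OF x] by (simp only: of_int_eq_iff) simp
  have "(of_int (eichler W x 8 + eichler W x 9 + eichler W x 10 + eichler W x 11) :: rat) =
     of_int ((x 8 + x 9 + x 10 + x 11) + x 1 * (W 8 + W 10) - x 3 * (W 9 - W 8 + W 11 - W 10))"
    using E[of 8] E[of 9] E[of 10] E[of 11] by (simp add: ratv_def eichler_rat_def Let_def rho_rat_def field_simps)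
  moreover have "even (W 8 + W 10)" "even (W 9 - W 8 + W 11 - W 10)" using W'(6-8) by presburger+
  ultimately show "even (eichler W x 8 + eichler W x 9 + eichler W x 10 + eichler W x 11)"
    using N_latD(3)[OF x] by (simp only: of_int_eq_iff) simp
qed

lemma shear_in_N: "x \<in> N_lat \<Longrightarrow> shear t x \<in> N_lat"
  using N_latD[of x] by (intro N_latI) (auto simp: shear_def)

lemma rho_isometry_shear: "rho_isometry (shear t)"
proof (rule rho_isometryI[where h = "shear (- t)"])
  fix x y assume x: "x \<in> N_lat" and y: "y \<in> N_lat"
  show "shear t x \<in> N_lat" "shear (- t) x \<in> N_lat" using shear_in_N x by auto
  show "shear (- t) (shear t x) = x" "shear t (shear (- t) x) = x"
    by (rule ext, simp add: shear_def algebra_simps)+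
  show "shear t (vadd x y) = vadd (shear t x) (shear t y)"
    by (rule ext, simp add: shear_def vadd_def algebra_simps)
  show "bN (shear t x) (shear t y) = bN x y" by (simp add: shear_def bN_expand algebra_simps)
next
  fix x assume "x \<in> N_lat"
  show "shear t (rho x) = rho (shear t x)"
    by (rule ext, rule nat_cases_12) (simp_all add: shear_def rho_def algebra_simps)
qed

lemma rho_isometry_eichler:
  assumes W: "eichler_param W"
  shows "rho_isometry (eichler W)"
proof -
  define c where "c = (\<Sum>j\<in>{4..<12}. W j ^ 2) div 4"
  have c_rat: "(of_int c :: rat) = (\<Sum>j\<in>{4..<12}. ratv W j ^ 2) / 4"
    using of_int_div_exact[OF eichler_param_sum_sq_dvd4[OF W]] by (simp add: c_def ratv_def)
  have W': "eichler_param (vneg W)" using eichler_param_vneg[OF W] .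
  note lift = ratv_eichler[OF _ W] ratv_eichler[OF _ W'] ratv_shear ratv_vneg c_rat
  show ?thesis
  proof (rule rho_isometryI[where h = "\<lambda>x. eichler (vneg W) (shear (- c) x)"])
    fix x y assume x: "x \<in> N_lat" and y: "y \<in> N_lat"
    show "eichler W x \<in> N_lat" using eichler_in_N[OF x W] .
    show "eichler (vneg W) (shear (- c) x) \<in> N_lat" using eichler_in_N[OF shear_in_N[OF x] W'] .
    show "eichler (vneg W) (shear (- c) (eichler W x)) = x"
      by (rule ratv_inj)
        (simp add: lift shear_in_N eichler_in_N[OF x W] x eichler_rat_inverse(2)[of "ratv W"])
    show "eichler W (eichler (vneg W) (shear (- c) x)) = x"
      by (rule ratv_inj)
        (simp add: lift shear_in_N eichler_in_N[OF shear_in_N[OF x] W'] x eichler_rat_inverse(1)[of "ratv W"])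
    show "eichler W (vadd x y) = vadd (eichler W x) (eichler W y)"
      by (rule ratv_inj) (simp add: lift vadd_in_N[OF x y] x y ratv_vadd eichler_rat_add)
    have "(of_int (bN (eichler W x) (eichler W y)) :: rat) = of_int (bN x y)"
      by (simp add: bN_ratv[symmetric] lift x y bN_eichler_rat)
    then show "bN (eichler W x) (eichler W y) = bN x y" by simp
  next
    fix x assume x: "x \<in> N_lat"
    show "eichler W (rho x) = rho (eichler W x)"
      by (rule ratv_inj) (simp add: lift rho_in_N[OF x] x ratv_rho eichler_rat_rho)
  qed
qed

definition hyp_swap :: "(nat \<Rightarrow> int) \<Rightarrow> (nat \<Rightarrow> int)" where
  "hyp_swap x = (\<lambda>i. if i = 0 then x 1 else if i = 1 then x 0 - 2 * x 2 else if i = 2 then x 1 + x 3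
              else if i = 3 then x 2 else x i)"

definition hyp_swap_inv :: "(nat \<Rightarrow> int) \<Rightarrow> (nat \<Rightarrow> int)" where
  "hyp_swap_inv x = (\<lambda>i. if i = 0 then x 1 + 2 * x 3 else if i = 1 then x 0 else if i = 2 then x 3
              else if i = 3 then x 2 - x 0 else x i)"

lemma rho_isometry_hyp_swap: "rho_isometry hyp_swap"
proof (rule rho_isometryI[where h = hyp_swap_inv])
  fix x y assume x: "x \<in> N_lat" and y: "y \<in> N_lat"
  show "hyp_swap x \<in> N_lat" "hyp_swap_inv x \<in> N_lat"
    using N_latD[OF x] by (auto intro!: N_latI simp: hyp_swap_def hyp_swap_inv_def)
  show "hyp_swap_inv (hyp_swap x) = x" "hyp_swap (hyp_swap_inv x) = x"
    by (rule ext, rule nat_cases_12; simp add: hyp_swap_def hyp_swap_inv_def)+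
  show "hyp_swap (vadd x y) = vadd (hyp_swap x) (hyp_swap y)"
    by (rule ext, simp add: hyp_swap_def vadd_def algebra_simps)
  show "bN (hyp_swap x) (hyp_swap y) = bN x y" by (simp add: hyp_swap_def bN_expand algebra_simps)
next
  fix x assume "x \<in> N_lat"
  show "hyp_swap (rho x) = rho (hyp_swap x)"
    by (rule ext, rule nat_cases_12) (simp_all add: hyp_swap_def rho_def algebra_simps)
qed

section \<open>Every root lies in the orbit of a standard root\<close>

text \<open>Identifying U + U(2) with the Gaussian integers squared, rho multiplies
  alpha = alpha1 + i alpha2 and beta = beta1 + i beta2 by i.\<close>

definition alpha1 :: "(nat \<Rightarrow> int) \<Rightarrow> int" where "alpha1 x = x 0 - x 2"
definition alpha2 :: "(nat \<Rightarrow> int) \<Rightarrow> int" where "alpha2 x = - x 2"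
definition beta1 :: "(nat \<Rightarrow> int) \<Rightarrow> int" where "beta1 x = x 1 + x 3"
definition beta2 :: "(nat \<Rightarrow> int) \<Rightarrow> int" where "beta2 x = - x 3"

definition alpha_norm :: "(nat \<Rightarrow> int) \<Rightarrow> int" where "alpha_norm x = alpha1 x ^ 2 + alpha2 x ^ 2"
definition beta_norm :: "(nat \<Rightarrow> int) \<Rightarrow> int" where "beta_norm x = beta1 x ^ 2 + beta2 x ^ 2"

text \<open>hyp_re + i hyp_im is (1 + i) alpha conj(beta); hyp_re is half the norm of the
  U + U(2) component.\<close>

definition hyp_re :: "(nat \<Rightarrow> int) \<Rightarrow> int" where
  "hyp_re x = x 0 * x 1 + 2 * x 2 * x 3"

definition hyp_im :: "(nat \<Rightarrow> int) \<Rightarrow> int" where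
  "hyp_im x = x 0 * x 1 + 2 * x 0 * x 3 - 2 * x 1 * x 2 - 2 * x 2 * x 3"

definition d4_norm :: "(nat \<Rightarrow> int) \<Rightarrow> int" where
  "d4_norm x = (\<Sum>j\<in>{4..<12}. x j ^ 2)"

definition N_root :: "(nat \<Rightarrow> int) \<Rightarrow> bool" where
  "N_root x \<longleftrightarrow> x \<in> N_lat \<and> bN x x = -2"

definition std_root :: "nat \<Rightarrow> int" where
  "std_root = (\<lambda>i. if i = 0 then -1 else if i = 1 then 1 else if i = 2 then -1 else 0)"

definition std_orbit :: "(nat \<Rightarrow> int) \<Rightarrow> bool" where
  "std_orbit x \<longleftrightarrow> (\<exists>g. rho_isometry g \<and> g x = std_root)"

lemma hyp_re_sq_plus_hyp_im_sq: "hyp_re x ^ 2 + hyp_im x ^ 2 = 2 * alpha_norm x * beta_norm x"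
  by (simp add: hyp_re_def hyp_im_def alpha_norm_def beta_norm_def alpha1_def alpha2_def
      beta1_def beta2_def power2_eq_square algebra_simps)

lemma bN_self: "bN x x = 2 * hyp_re x - d4_norm x"
  by (simp add: bN_expand hyp_re_def d4_norm_def sum_atLeastLessThan_4_12 power2_eq_square algebra_simps)

lemma alpha_norm_nonneg: "alpha_norm x \<ge> 0"
  by (simp add: alpha_norm_def)

lemma alpha_norm_eq_0: "alpha_norm x = 0 \<Longrightarrow> x 0 = 0 \<and> x 2 = 0"
  by (simp add: alpha_norm_def alpha1_def alpha2_def sum_power2_eq_zero_iff)

lemma beta_norm_hyp_swap: "beta_norm (hyp_swap x) = alpha_norm x"
  by (simp add: beta_norm_def alpha_norm_def beta1_def beta2_def alpha1_def alpha2_def hyp_swap_def)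

lemma beta_norm_shear: "beta_norm (shear t x) = beta_norm x"
  by (simp add: beta_norm_def beta1_def beta2_def shear_def)

lemma hyp_im_shear: "hyp_im (shear t x) = hyp_im x + 2 * t * beta_norm x"
  by (simp add: hyp_im_def shear_def beta_norm_def beta1_def beta2_def power2_eq_square algebra_simps)

lemma d4_norm_shear: "d4_norm (shear t x) = d4_norm x"
  by (simp add: d4_norm_def shear_def)

lemma eichler_fixes_f_coeffs: "eichler W x 1 = x 1" "eichler W x 3 = x 3"
  by (simp_all add: eichler_def Let_def)

lemma beta_norm_eichler: "beta_norm (eichler W x) = beta_norm x"
  unfolding beta_norm_def beta1_def beta2_def eichler_fixes_f_coeffs ..

lemma eichler_d4_coeff:
  assumes "eichler_param W" "4 \<le> j" "j < 12"
  shows "2 * eichler W x j = 2 * x j + x 1 * (W j - rho W j) - 2 * x 3 * rho W j"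
  using eichler_param_diff_rho_even[OF assms] assms(2,3) by (auto simp: eichler_def Let_def elim!: evenE)

lemma rho_isometry_root: "rho_isometry g \<Longrightarrow> N_root x \<Longrightarrow> N_root (g x)"
  unfolding N_root_def using rho_isometry_in_N rho_isometry_bN by metis

lemma std_orbit_step:
  assumes "rho_isometry g" "std_orbit (g x)"
  shows "std_orbit x"
proof -
  obtain h where "rho_isometry h" "h (g x) = std_root" using assms(2) std_orbit_def by auto
  then have "rho_isometry (h \<circ> g)" "(h \<circ> g) x = std_root" using rho_isometry_comp assms(1) by auto
  then show ?thesis unfolding std_orbit_def by blast
qed

lemma std_orbit_std_root: "std_orbit std_root"
proof -
  have "rho_isometry id" by (rule rho_isometryI[where h = id]) auto
  then show ?thesis unfolding std_orbit_def by auto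
qed

lemma std_orbit_rho: "std_orbit (rho x) \<Longrightarrow> std_orbit x"
  using std_orbit_step[OF rho_isometry_rho] .

lemma std_orbit_shear: "std_orbit (shear t x) \<Longrightarrow> std_orbit x"
  using std_orbit_step[OF rho_isometry_shear] .

lemma std_orbit_hyp_swap: "std_orbit (hyp_swap x) \<Longrightarrow> std_orbit x"
  using std_orbit_step[OF rho_isometry_hyp_swap] .

lemma std_orbit_eichler: "eichler_param W \<Longrightarrow> std_orbit (eichler W x) \<Longrightarrow> std_orbit x"
  using std_orbit_step[OF rho_isometry_eichler] .

lemma int_sum_sq_eq_1:
  assumes "(a::int)^2 + b^2 = 1"
  shows "(b = 0 \<and> (a = 1 \<or> a = -1)) \<or> (a = 0 \<and> (b = 1 \<or> b = -1))"
proof -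
  have "a^2 \<le> 1" "b^2 \<le> 1" using assms zero_le_power2[of a] zero_le_power2[of b] by linarith+
  then have "a \<in> {-1,0,1}" "b \<in> {-1,0,1}" by (auto simp: abs_square_le_1 abs_le_iff)
  then show ?thesis using assms by auto
qed

lemma std_orbit_hyperbolic_root:
  assumes "N_root y" "\<And>j. 4 \<le> j \<Longrightarrow> j < 12 \<Longrightarrow> y j = 0" "beta_norm y = 1"
  shows "std_orbit y"
proof -
  have d4: "y i = 0" if "4 \<le> i" for i
    using assms(2)[of i] N_latD(1)[of y i] assms(1) that unfolding N_root_def by linarith
  then have "d4_norm y = 0" by (simp add: d4_norm_def)
  then have re: "y 0 * y 1 + 2 * y 2 * y 3 = -1"
    using assms(1) bN_self[of y] by (simp add: N_root_def hyp_re_def)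
  have "(y 1 + y 3)^2 + y 3 ^2 = 1" using assms(3) by (simp add: beta_norm_def beta1_def beta2_def)
  then consider "y 3 = 0" "y 1 = 1" | "y 3 = 0" "y 1 = -1" | "y 3 = -1" "y 1 = 1" | "y 3 = 1" "y 1 = -1"
    using int_sum_sq_eq_1 by fastforce
  then show ?thesis
  proof cases
    case 1
    have "shear (y 2 + 1) y = std_root"
      by (rule ext, rule nat_cases_12) (use d4 1 re in \<open>auto simp: shear_def std_root_def\<close>)
    then show ?thesis using std_orbit_std_root std_orbit_shear by metis
  next
    case 2
    have "rho (rho (shear (1 - y 2) y)) = std_root"
      by (rule ext, rule nat_cases_12) (use d4 2 re in \<open>auto simp: shear_def std_root_def rho_def\<close>)
    then show ?thesis using std_orbit_std_root std_orbit_shear std_orbit_rho by metis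
  next
    case 3
    have "rho (rho (rho (shear (y 2) y))) = std_root"
      by (rule ext, rule nat_cases_12) (use d4 3 re in \<open>auto simp: shear_def std_root_def rho_def\<close>)
    then show ?thesis using std_orbit_std_root std_orbit_shear std_orbit_rho by metis
  next
    case 4
    have "rho (shear (- y 2) y) = std_root"
      by (rule ext, rule nat_cases_12) (use d4 4 re in \<open>auto simp: shear_def std_root_def rho_def\<close>)
    then show ?thesis using std_orbit_std_root std_orbit_shear std_orbit_rho by metis
  qed
qed

definition d4_lincomb :: "int \<Rightarrow> int \<Rightarrow> (nat \<Rightarrow> int) \<Rightarrow> (nat \<Rightarrow> int)" where
  "d4_lincomb p q v = (\<lambda>i. if 4 \<le> i \<and> i < 12 then p * v i + q * rho v i else 0)"

lemma eichler_param_d4_lincomb: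
  assumes v: "v \<in> N_lat" and pq: "even (p - q)"
  shows "eichler_param (d4_lincomb p q v)"
proof -
  from pq obtain d where "p - q = 2 * d" by (rule evenE)
  then have p: "p = q + 2 * d" by simp
  from N_latD(2)[OF v] obtain s1 where "v 4 + v 5 + v 6 + v 7 = 2 * s1" by (rule evenE)
  then have v6: "v 6 = 2 * s1 - v 4 - v 5 - v 7" by simp
  from N_latD(3)[OF v] obtain s2 where "v 8 + v 9 + v 10 + v 11 = 2 * s2" by (rule evenE)
  then have v10: "v 10 = 2 * s2 - v 8 - v 9 - v 11" by simp
  let ?W = "d4_lincomb p q v"
  have "?W 5 - ?W 4 = 2 * (d * (v 5 - v 4) - q * v 4)"
    "?W 6 - ?W 4 = 2 * (q * (s1 - v 4 - v 5) + d * (v 6 - v 4))"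
    "?W 7 - ?W 4 = 2 * (q * (v 7 - s1) + d * (v 7 - v 4))"
    "?W 9 - ?W 8 = 2 * (d * (v 9 - v 8) - q * v 8)"
    "?W 10 - ?W 8 = 2 * (q * (s2 - v 8 - v 9) + d * (v 10 - v 8))"
    "?W 11 - ?W 8 = 2 * (q * (v 11 - s2) + d * (v 11 - v 8))"
    by (simp_all add: d4_lincomb_def rho_def p v6 v10 algebra_simps)
  moreover have "\<forall>i. (i < 4 \<or> 12 \<le> i) \<longrightarrow> ?W i = 0" by (simp add: d4_lincomb_def)
  ultimately show ?thesis unfolding eichler_param_def by (metis dvd_triv_left)
qed

lemma std_orbit_beta_norm_1:
  assumes r: "N_root x" and beta: "beta_norm x = 1"
  shows "std_orbit x"
proof -
  have xN: "x \<in> N_lat" using r N_root_def by auto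
  define p where "p = beta1 x + beta2 x"
  define q where "q = beta1 x - beta2 x"
  define W where "W = vneg (d4_lincomb p q x)"
  have W: "eichler_param W"
    unfolding W_def by (rule eichler_param_vneg[OF eichler_param_d4_lincomb[OF xN]]) (simp add: p_def q_def)
  let ?y = "eichler W x"
  txt \<open>This Eichler transformation multiplies the D4 + D4 component by 1 - |beta|^2.\<close>
  have "?y j = 0" if "4 \<le> j" "j < 12" for j
  proof -
    have "j = 4 \<or> j = 5 \<or> j = 6 \<or> j = 7 \<or> j = 8 \<or> j = 9 \<or> j = 10 \<or> j = 11" using that by presburger
    then have "2 * ?y j = 2 * (1 - beta_norm x) * x j"
      using eichler_d4_coeff[OF W that, of x]
      by (elim disjE) (simp_all add: W_def vneg_def d4_lincomb_def rho_def p_def q_def beta_norm_def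
          beta1_def beta2_def power2_eq_square algebra_simps)
    then show ?thesis using beta by simp
  qed
  moreover have "N_root ?y" using rho_isometry_root[OF rho_isometry_eichler[OF W] r] .
  moreover have "beta_norm ?y = 1" using beta beta_norm_eichler by simp
  ultimately show ?thesis using std_orbit_eichler[OF W] std_orbit_hyperbolic_root by blast
qed

lemma root_alpha_zero_d4_norm:
  assumes "N_root x" "x 0 = 0" "x 2 = 0"
  shows "d4_norm x = 2"
  using assms bN_self[of x] by (simp add: N_root_def hyp_re_def)

definition d4_twist :: "(nat \<Rightarrow> int) \<Rightarrow> (nat \<Rightarrow> int)" where
  "d4_twist v = (\<lambda>i. if i = 4 then v 4 - v 6 else if i = 5 then v 5 + v 7 else if i = 6 then v 6 + v 4
     else if i = 7 then v 7 - v 5 else if i = 8 then v 8 - v 10 else if i = 9 then v 9 + v 11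
     else if i = 10 then v 10 + v 8 else if i = 11 then v 11 - v 9 else 0)"

lemma eichler_param_d4_twist:
  assumes v: "v \<in> N_lat"
  shows "eichler_param (d4_twist v)"
proof -
  have "even (v 4 + v 5 + v 6 + v 7)" "even (v 8 + v 9 + v 10 + v 11)" using N_latD[OF v] by auto
  then have "even (d4_twist v 5 - d4_twist v 4)" "even (d4_twist v 6 - d4_twist v 4)"
    "even (d4_twist v 7 - d4_twist v 4)" "even (d4_twist v 9 - d4_twist v 8)"
    "even (d4_twist v 10 - d4_twist v 8)" "even (d4_twist v 11 - d4_twist v 8)"
    by (simp_all add: d4_twist_def) presburger+
  then show ?thesis unfolding eichler_param_def by (simp add: d4_twist_def)
qed

lemma std_orbit_special_root:
  assumes r: "N_root x" and coeffs: "x 0 = 0" "x 2 = 0" "x 1 = 2" "x 3 = -1"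
  shows "std_orbit x"
proof -
  have xN: "x \<in> N_lat" using r N_root_def by auto
  have d4: "d4_norm x = 2" using root_alpha_zero_d4_norm[OF r coeffs(1,2)] .
  define W where "W = vneg (d4_twist x)"
  have W: "eichler_param W" unfolding W_def by (rule eichler_param_vneg[OF eichler_param_d4_twist[OF xN]])
  have "(\<Sum>j\<in>{4..<12}. x j * W j) = -2" "(\<Sum>j\<in>{4..<12}. x j * rho W j) = 0"
    "(\<Sum>j\<in>{4..<12}. W j ^ 2) = 4"
    using d4 by (simp_all add: d4_norm_def sum_atLeastLessThan_4_12 W_def vneg_def d4_twist_def rho_def
        power2_eq_square algebra_simps)
  then have "eichler W x 0 = -1" "eichler W x 2 = -1" using coeffs by (simp_all add: eichler_def Let_def)
  then have "beta_norm (hyp_swap (eichler W x)) = 1"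
    by (simp add: beta_norm_hyp_swap alpha_norm_def alpha1_def alpha2_def)
  moreover have "N_root (hyp_swap (eichler W x))"
    using rho_isometry_root[OF rho_isometry_hyp_swap rho_isometry_root[OF rho_isometry_eichler[OF W] r]] .
  ultimately show ?thesis using std_orbit_beta_norm_1 std_orbit_hyp_swap std_orbit_eichler[OF W] by blast
qed

lemma std_orbit_alpha_zero:
  assumes r: "N_root x" and alpha: "x 0 = 0" "x 2 = 0"
  shows "std_orbit x"
proof -
  have xN: "x \<in> N_lat" using r N_root_def by auto
  have d4: "d4_norm x = 2" using root_alpha_zero_d4_norm[OF r alpha] .
  let ?y = "hyp_swap x"
  have ry: "N_root ?y" using rho_isometry_root[OF rho_isometry_hyp_swap r] .
  define t :: int where "t = (if odd (x 1) then 0 else 1)"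
  define p where "p = 1 + x 3"
  define q where "q = - (x 1 + x 3) - t"
  have pq: "even (p - q)" unfolding p_def q_def t_def by auto
  define W where "W = d4_lincomb p q ?y"
  have W: "eichler_param W"
    unfolding W_def by (rule eichler_param_d4_lincomb[OF rho_isometry_in_N[OF rho_isometry_hyp_swap xN] pq])
  have "(\<Sum>j\<in>{4..<12}. ?y j * W j) = p * d4_norm x"
    "(\<Sum>j\<in>{4..<12}. ?y j * rho W j) = - q * d4_norm x"
    by (simp_all add: d4_norm_def sum_atLeastLessThan_4_12 W_def d4_lincomb_def hyp_swap_def rho_def
        power2_eq_square algebra_simps)
  then have "eichler W ?y 0 = x 1 + p + q" "eichler W ?y 2 = x 1 + x 3 + q"
    using alpha d4 by (simp_all add: eichler_def Let_def hyp_swap_def)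
  moreover have "eichler W ?y 1 = 0" "eichler W ?y 3 = 0"
    unfolding eichler_fixes_f_coeffs using alpha by (simp_all add: hyp_swap_def)
  ultimately have w: "hyp_swap (eichler W ?y) 0 = 0" "hyp_swap (eichler W ?y) 2 = 0"
    "hyp_swap (eichler W ?y) 1 = 1 + t" "hyp_swap (eichler W ?y) 3 = - t"
    by (simp_all add: hyp_swap_def p_def q_def)
  have rw: "N_root (hyp_swap (eichler W ?y))"
    using rho_isometry_root[OF rho_isometry_hyp_swap rho_isometry_root[OF rho_isometry_eichler[OF W] ry]] .
  have "std_orbit (hyp_swap (eichler W ?y))"
  proof (cases "odd (x 1)")
    case True
    then have "beta_norm (hyp_swap (eichler W ?y)) = 1"
      using w by (simp add: t_def beta_norm_def beta1_def beta2_def)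
    then show ?thesis using std_orbit_beta_norm_1[OF rw] by simp
  next
    case False
    then show ?thesis using std_orbit_special_root[OF rw] w by (simp add: t_def)
  qed
  then show ?thesis using std_orbit_hyp_swap std_orbit_eichler[OF W] by blast
qed

definition parity_shift :: "int \<Rightarrow> int \<Rightarrow> int \<Rightarrow> int" where
  "parity_shift n P a = (if even (a div n - P) then - (a div n) else - (a div n) - 1)"

lemma parity_shift_parity: "even (parity_shift n P a - P)"
proof -
  have "\<And>m::int. even ((if even (m - P) then - m else - m - 1) - P)" by presburger
  then show ?thesis unfolding parity_shift_def by blast
qed

text \<open>The two shifts of a by multiples of n of prescribed parity are a mod n and a mod n - n
  up to order.\<close>

lemma parity_shift_sq_sum_le:
  assumes n: "n > 0"
  shows "(a + n * parity_shift n 0 a)^2 + (a + n * parity_shift n 1 a)^2 \<le> n^2"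
proof -
  define r where "r = a mod n"
  have a: "a = n * (a div n) + r" by (simp add: r_def)
  have r: "0 \<le> r" "r < n" using n by (simp_all add: r_def)
  have "r^2 + (r - n)^2 \<le> n^2"
    using r mult_nonneg_nonpos[of r "r - n"] by (simp add: power2_eq_square algebra_simps)
  moreover have "(a + n * parity_shift n 0 a)^2 + (a + n * parity_shift n 1 a)^2 = r^2 + (r - n)^2"
  proof (cases "even (a div n)")
    case True
    then have "a + n * parity_shift n 0 a = r" "a + n * parity_shift n 1 a = r - n"
      by (subst a; simp add: parity_shift_def algebra_simps)+
    then show ?thesis by simp
  next
    case False
    then have "a + n * parity_shift n 0 a = r - n" "a + n * parity_shift n 1 a = r"
      by (subst a; simp add: parity_shift_def algebra_simps)+
    then show ?thesis by simp
  qed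
  ultimately show ?thesis by simp
qed

lemma exists_parity_shift_sum_le:
  assumes "n > 0" "finite B"
  obtains P :: int where "P \<in> {0, 1}"
    "2 * (\<Sum>j\<in>B. (V j + n * parity_shift n P (V j))^2) \<le> int (card B) * n^2"
proof -
  have "(\<Sum>j\<in>B. (V j + n * parity_shift n 0 (V j))^2) + (\<Sum>j\<in>B. (V j + n * parity_shift n 1 (V j))^2)
      \<le> (\<Sum>j\<in>B. n^2)"
    unfolding sum.distrib[symmetric] by (rule sum_mono) (rule parity_shift_sq_sum_le[OF assms(1)])
  then show ?thesis using that[of 0] that[of 1] by fastforce
qed

lemma exists_eichler_param_close:
  fixes V :: "nat \<Rightarrow> int"
  assumes n: "n > 0"
  obtains W where "eichler_param W" "(\<Sum>j\<in>{4..<12}. (V j + n * W j)^2) \<le> 4 * n^2"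
proof -
  obtain P1 where P1: "P1 \<in> {0, 1}"
    "2 * (\<Sum>j\<in>{4..<8}. (V j + n * parity_shift n P1 (V j))^2) \<le> 4 * n^2"
    using exists_parity_shift_sum_le[OF n, of "{4..<8}" V] by auto
  obtain P2 where P2: "P2 \<in> {0, 1}"
    "2 * (\<Sum>j\<in>{8..<12}. (V j + n * parity_shift n P2 (V j))^2) \<le> 4 * n^2"
    using exists_parity_shift_sum_le[OF n, of "{8..<12}" V] by auto
  define W where "W i = (if 4 \<le> i \<and> i < 8 then parity_shift n P1 (V i)
      else if 8 \<le> i \<and> i < 12 then parity_shift n P2 (V i) else 0)" for i
  have e1: "even (W j - P1)" if "4 \<le> j" "j < 8" for j using that parity_shift_parity by (simp add: W_def)
  have e2: "even (W j - P2)" if "8 \<le> j" "j < 12" for j using that parity_shift_parity by (simp add: W_def)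
  have "even (W 5 - W 4)" "even (W 6 - W 4)" "even (W 7 - W 4)"
    using e1[of 4] e1[of 5] e1[of 6] e1[of 7] by presburger+
  moreover have "even (W 9 - W 8)" "even (W 10 - W 8)" "even (W 11 - W 8)"
    using e2[of 8] e2[of 9] e2[of 10] e2[of 11] by presburger+
  ultimately have "eichler_param W" unfolding eichler_param_def by (simp add: W_def)
  moreover have "(\<Sum>j\<in>{4..<12}. (V j + n * W j)^2)
      = (\<Sum>j\<in>{4..<8}. (V j + n * parity_shift n P1 (V j))^2)
        + (\<Sum>j\<in>{8..<12}. (V j + n * parity_shift n P2 (V j))^2)"
    by (simp add: W_def numeral_eq_Suc atLeastLessThanSuc add_ac)
  ultimately show ?thesis using that P1(2) P2(2) by simp
qed

text \<open>On each pair of D4 coordinates swapped by rho, x 1 + (x 1 + 2 x 3) rho acts as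
  multiplication by a Gaussian integer of norm 2 |beta|^2.\<close>

lemma eichler_d4_pair:
  assumes W: "eichler_param W"
    and jk: "(j = 4 \<and> k = 5) \<or> (j = 6 \<and> k = 7) \<or> (j = 8 \<and> k = 9) \<or> (j = 10 \<and> k = 11)"
  shows "x 1 * eichler W x j + (x 1 + 2 * x 3) * eichler W x k
           = d4_lincomb (x 1) (x 1 + 2 * x 3) x j + beta_norm x * W j"
    and "x 1 * eichler W x k - (x 1 + 2 * x 3) * eichler W x j
           = d4_lincomb (x 1) (x 1 + 2 * x 3) x k + beta_norm x * W k"
proof -
  have j: "4 \<le> j" "j < 12" and k: "4 \<le> k" "k < 12" using jk by auto
  note yj = eichler_d4_coeff[OF W j, of x] and yk = eichler_d4_coeff[OF W k, of x]
  have "2 * (x 1 * eichler W x j + (x 1 + 2 * x 3) * eichler W x k)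
      = x 1 * (2 * eichler W x j) + (x 1 + 2 * x 3) * (2 * eichler W x k)"
    by (simp add: algebra_simps)
  also have "\<dots> = 2 * (d4_lincomb (x 1) (x 1 + 2 * x 3) x j + beta_norm x * W j)"
    unfolding yj yk using jk
    by (elim disjE) (simp_all add: d4_lincomb_def rho_def beta_norm_def beta1_def beta2_def
        power2_eq_square algebra_simps)
  finally show "x 1 * eichler W x j + (x 1 + 2 * x 3) * eichler W x k
      = d4_lincomb (x 1) (x 1 + 2 * x 3) x j + beta_norm x * W j" by simp
  have "2 * (x 1 * eichler W x k - (x 1 + 2 * x 3) * eichler W x j)
      = x 1 * (2 * eichler W x k) - (x 1 + 2 * x 3) * (2 * eichler W x j)"
    by (simp add: algebra_simps)
  also have "\<dots> = 2 * (d4_lincomb (x 1) (x 1 + 2 * x 3) x k + beta_norm x * W k)"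
    unfolding yj yk using jk
    by (elim disjE) (simp_all add: d4_lincomb_def rho_def beta_norm_def beta1_def beta2_def
        power2_eq_square algebra_simps)
  finally show "x 1 * eichler W x k - (x 1 + 2 * x 3) * eichler W x j
      = d4_lincomb (x 1) (x 1 + 2 * x 3) x k + beta_norm x * W k" by simp
qed

lemma beta_norm_mult_d4_norm_eichler:
  assumes W: "eichler_param W"
  shows "2 * beta_norm x * d4_norm (eichler W x)
       = (\<Sum>j\<in>{4..<12}. (d4_lincomb (x 1) (x 1 + 2 * x 3) x j + beta_norm x * W j)^2)"
proof -
  let ?p = "x 1" and ?q = "x 1 + 2 * x 3" and ?y = "eichler W x"
  have "2 * beta_norm x = ?p^2 + ?q^2"
    by (simp add: beta_norm_def beta1_def beta2_def power2_eq_square algebra_simps)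
  then have "2 * beta_norm x * d4_norm ?y
      = (?p * ?y 4 + ?q * ?y 5)^2 + (?p * ?y 5 - ?q * ?y 4)^2 + (?p * ?y 6 + ?q * ?y 7)^2
        + (?p * ?y 7 - ?q * ?y 6)^2 + (?p * ?y 8 + ?q * ?y 9)^2 + (?p * ?y 9 - ?q * ?y 8)^2
        + (?p * ?y 10 + ?q * ?y 11)^2 + (?p * ?y 11 - ?q * ?y 10)^2"
    by (simp add: d4_norm_def sum_atLeastLessThan_4_12 power2_eq_square algebra_simps)
  also have "\<dots> = (\<Sum>j\<in>{4..<12}. (d4_lincomb ?p ?q x j + beta_norm x * W j)^2)"
    by (simp only: sum_atLeastLessThan_4_12 eichler_d4_pair[OF W] simp_thms)
  finally show ?thesis .
qed

lemma exists_eichler_small_d4_norm: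
  assumes n: "beta_norm x > 0"
  obtains W where "eichler_param W" "d4_norm (eichler W x) \<le> 2 * beta_norm x"
proof -
  obtain W where W: "eichler_param W"
    and close: "(\<Sum>j\<in>{4..<12}. (d4_lincomb (x 1) (x 1 + 2 * x 3) x j + beta_norm x * W j)^2)
                  \<le> 4 * (beta_norm x)^2"
    using exists_eichler_param_close[OF n] by blast
  have "2 * beta_norm x * d4_norm (eichler W x) \<le> 2 * beta_norm x * (2 * beta_norm x)"
    using close beta_norm_mult_d4_norm_eichler[OF W] by (simp add: power2_eq_square)
  then show ?thesis using that W n by simp
qed

lemma exists_shear_hyp_im_bound:
  assumes n: "beta_norm y > 0"
  obtains t where "- beta_norm y < hyp_im (shear t y)" "hyp_im (shear t y) \<le> beta_norm y"
proof -
  define n where "n = beta_norm y"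
  define u where "u = n - hyp_im y"
  have "u = 2 * n * (u div (2 * n)) + u mod (2 * n)" by simp
  moreover have "0 \<le> u mod (2 * n)" "u mod (2 * n) < 2 * n" using n n_def by simp_all
  moreover have "hyp_im (shear (u div (2 * n)) y) = hyp_im y + 2 * (u div (2 * n)) * n"
    using hyp_im_shear n_def by simp
  ultimately show ?thesis using that[of "u div (2 * n)"] unfolding u_def n_def by (simp add: algebra_simps)
qed

text \<open>The Eichler step shortens the D4 + D4 part, which bounds hyp_re because x is a root; the
  shear then bounds hyp_im.\<close>

lemma alpha_norm_reduction:
  assumes r: "N_root x" and n2: "beta_norm x \<ge> 2"
  obtains g where "rho_isometry g" "N_root (g x)" "beta_norm (g x) = beta_norm x"
    "alpha_norm (g x) < beta_norm x"
proof -
  define n where "n = beta_norm x"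
  have "beta_norm x > 0" using n2 by simp
  then obtain W where W: "eichler_param W" and d4: "d4_norm (eichler W x) \<le> 2 * n"
    unfolding n_def by (rule exists_eichler_small_d4_norm)
  let ?y = "eichler W x"
  have ny: "beta_norm ?y = n" using beta_norm_eichler n_def by simp
  obtain t where im: "- n < hyp_im (shear t ?y)" "hyp_im (shear t ?y) \<le> n"
    using exists_shear_hyp_im_bound[of ?y] ny n2 n_def by auto
  let ?g = "shear t \<circ> eichler W"
  have g: "rho_isometry ?g" using rho_isometry_comp[OF rho_isometry_shear rho_isometry_eichler[OF W]] .
  have rz: "N_root (?g x)" using rho_isometry_root[OF g r] .
  have nz: "beta_norm (?g x) = n" using beta_norm_shear ny by simp
  have "2 * hyp_re (?g x) = d4_norm ?y - 2"
    using rz bN_self[of "?g x"] d4_norm_shear[of t ?y] by (simp add: N_root_def)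
  moreover have "d4_norm ?y \<ge> 0" by (simp add: d4_norm_def sum_nonneg)
  ultimately have "\<bar>hyp_re (?g x)\<bar> \<le> n - 1" using d4 n2 n_def by simp
  then have "hyp_re (?g x)^2 \<le> (n - 1)^2" using abs_le_square_iff[of "hyp_re (?g x)" "n - 1"] n2 n_def by simp
  moreover have "hyp_im (?g x)^2 \<le> n^2"
    using abs_le_square_iff[of "hyp_im (?g x)" n] im n2 by (simp add: abs_le_iff)
  ultimately have "2 * alpha_norm (?g x) * n \<le> (n - 1)^2 + n^2"
    using hyp_re_sq_plus_hyp_im_sq[of "?g x"] nz by simp
  also have "\<dots> < 2 * n * n" using n2 n_def by (simp add: power2_eq_square algebra_simps)
  finally have "alpha_norm (?g x) < n" using n2 n_def by simp
  then show ?thesis using that g rz nz n_def by simp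
qed

lemma std_orbit_via_hyp_swap:
  assumes r: "N_root x" and swap: "alpha_norm x > 0 \<Longrightarrow> std_orbit (hyp_swap x)"
  shows "std_orbit x"
proof (cases "alpha_norm x = 0")
  case True
  then show ?thesis using std_orbit_alpha_zero[OF r] alpha_norm_eq_0 by blast
next
  case False
  then show ?thesis using swap std_orbit_hyp_swap alpha_norm_nonneg[of x] by fastforce
qed

lemma std_orbit_beta_norm_pos: "N_root x \<Longrightarrow> beta_norm x > 0 \<Longrightarrow> std_orbit x"
proof (induction "nat (beta_norm x)" arbitrary: x rule: less_induct)
  case less
  show ?case
  proof (cases "beta_norm x = 1")
    case True
    then show ?thesis using std_orbit_beta_norm_1[OF less.prems(1)] by simp
  next
    case False
    then obtain g where g: "rho_isometry g" "N_root (g x)" "beta_norm (g x) = beta_norm x"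
        "alpha_norm (g x) < beta_norm x"
      using alpha_norm_reduction[OF less.prems(1)] less.prems(2) by force
    have "std_orbit (hyp_swap (g x))" if "alpha_norm (g x) > 0"
      using less.hyps[of "hyp_swap (g x)"] rho_isometry_root[OF rho_isometry_hyp_swap g(2)]
        beta_norm_hyp_swap[of "g x"] g(4) that by simp
    then have "std_orbit (g x)" using std_orbit_via_hyp_swap[OF g(2)] by blast
    then show ?thesis using std_orbit_step[OF g(1)] by blast
  qed
qed

theorem std_orbit_root:
  assumes r: "N_root x"
  shows "std_orbit x"
proof (cases "beta_norm x > 0")
  case True
  then show ?thesis using std_orbit_beta_norm_pos[OF r] by blast
next
  case False
  show ?thesis
    using std_orbit_via_hyp_swap[OF r] std_orbit_beta_norm_pos
      rho_isometry_root[OF rho_isometry_hyp_swap r] beta_norm_hyp_swap by simp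
qed

section \<open>The orthogonal complement of a root pair and the half sum\<close>

lemma orth_compl_R_lat_iff:
  "x \<in> orth_compl (R_lat r) \<longleftrightarrow> x \<in> N_lat \<and> bN x r = 0 \<and> bN x (rho r) = 0"
proof
  assume x: "x \<in> orth_compl (R_lat r)"
  have "r \<in> R_lat r" "rho r \<in> R_lat r"
    unfolding R_lat_def by (force intro: exI[of _ 1] exI[of _ 0])+
  then show "x \<in> N_lat \<and> bN x r = 0 \<and> bN x (rho r) = 0" using x unfolding orth_compl_def by auto
next
  assume "x \<in> N_lat \<and> bN x r = 0 \<and> bN x (rho r) = 0"
  then show "x \<in> orth_compl (R_lat r)" unfolding orth_compl_def R_lat_def by (auto simp: bN_lincomb_right)
qed

lemma bij_betw_orth_compl_rho_isometry:
  assumes h: "rho_isometry h" and r: "r \<in> N_lat"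
  shows "bij_betw h (orth_compl (R_lat r)) (orth_compl (R_lat (h r)))"
proof -
  have bij: "bij_betw h N_lat N_lat" using rho_isometry_bij[OF h] .
  have sub: "orth_compl (R_lat r) \<subseteq> N_lat" using orth_compl_R_lat_iff by auto
  have h_rho: "h (rho r) = rho (h r)" using rho_isometry_commute_rho[OF h r] .
  have orth: "bN (h x) (h r) = 0 \<and> bN (h x) (rho (h r)) = 0 \<longleftrightarrow> bN x r = 0 \<and> bN x (rho r) = 0"
    if "x \<in> N_lat" for x
    using rho_isometry_bN[OF h that r] rho_isometry_bN[OF h that rho_in_N[OF r]] h_rho by simp
  have "h ` orth_compl (R_lat r) = orth_compl (R_lat (h r))"
  proof
    show "h ` orth_compl (R_lat r) \<subseteq> orth_compl (R_lat (h r))"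
      using orth rho_isometry_in_N[OF h] by (auto simp: orth_compl_R_lat_iff)
    show "orth_compl (R_lat (h r)) \<subseteq> h ` orth_compl (R_lat r)"
    proof
      fix y assume y: "y \<in> orth_compl (R_lat (h r))"
      then obtain x where "x \<in> N_lat" "y = h x" using bij unfolding bij_betw_def orth_compl_R_lat_iff by blast
      then show "y \<in> h ` orth_compl (R_lat r)" using y orth by (auto simp: orth_compl_R_lat_iff)
    qed
  qed
  then show ?thesis using bij sub unfolding bij_betw_def by (meson inj_on_subset)
qed

definition std_d4_root :: "nat \<Rightarrow> int" where
  "std_d4_root = (\<lambda>i. if i = 8 \<or> i = 9 then 1 else 0)"

lemma N_root_std_d4_root: "N_root std_d4_root"
  unfolding N_root_def by (auto intro!: N_latI simp: std_d4_root_def bN_expand)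

lemma orth_compl_std_d4_root_iff:
  "x \<in> orth_compl (R_lat std_d4_root) \<longleftrightarrow> x \<in> N_lat \<and> x 8 = 0 \<and> x 9 = 0"
  unfolding orth_compl_R_lat_iff by (auto simp: bN_expand std_d4_root_def rho_def)

text \<open>On the complement of std_d4_root the coordinates 10 and 11 have even sum; writing them as
  a + b and a - b, the pair (a, b) are the coordinates of A1 + A1.\<close>

definition orth_to_M :: "(nat \<Rightarrow> int) \<Rightarrow> (nat \<Rightarrow> int)" where
  "orth_to_M x = (\<lambda>i. if i < 8 then x i else if i = 8 then (x 10 + x 11) div 2
     else if i = 9 then (x 10 - x 11) div 2 else 0)"

definition M_to_orth :: "(nat \<Rightarrow> int) \<Rightarrow> (nat \<Rightarrow> int)" where
  "M_to_orth m = (\<lambda>i. if i < 8 then m i else if i = 10 then m 8 + m 9 else if i = 11 then m 8 - m 9 else 0)"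

lemma orth_compl_std_d4_root_coords:
  assumes "x \<in> orth_compl (R_lat std_d4_root)"
  obtains a b where "x 10 = a + b" "x 11 = a - b" "orth_to_M x 8 = a" "orth_to_M x 9 = b"
proof -
  have x: "x \<in> N_lat" "x 8 = 0" "x 9 = 0" using assms orth_compl_std_d4_root_iff by auto
  have "even (x 10 + x 11)" using N_latD(3)[OF x(1)] x(2,3) by simp
  then obtain a where a: "x 10 + x 11 = 2 * a" by (rule evenE)
  then have "x 10 = a + (x 10 - a)" "x 11 = a - (x 10 - a)" "orth_to_M x 8 = a" "orth_to_M x 9 = x 10 - a"
    by (simp_all add: orth_to_M_def)
  then show ?thesis using that by blast
qed

lemma bij_betw_orth_to_M: "bij_betw orth_to_M (orth_compl (R_lat std_d4_root)) M_lat"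
proof (rule bij_betw_byWitness[where f' = M_to_orth])
  show "\<forall>x\<in>orth_compl (R_lat std_d4_root). M_to_orth (orth_to_M x) = x"
  proof
    fix x assume x: "x \<in> orth_compl (R_lat std_d4_root)"
    then obtain a b where ab: "x 10 = a + b" "x 11 = a - b" "orth_to_M x 8 = a" "orth_to_M x 9 = b"
      by (rule orth_compl_std_d4_root_coords)
    have x': "x \<in> N_lat" "x 8 = 0" "x 9 = 0" using x orth_compl_std_d4_root_iff by auto
    show "M_to_orth (orth_to_M x) = x"
      by (rule ext, rule nat_cases_12)
        (use ab x' N_latD(1)[OF x'(1)] in \<open>simp_all add: M_to_orth_def orth_to_M_def\<close>)
  qed
  show "\<forall>m\<in>M_lat. orth_to_M (M_to_orth m) = m"
  proof
    fix m assume "m \<in> M_lat"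
    then have m: "\<And>i. i \<ge> 10 \<Longrightarrow> m i = 0" by (auto simp: M_lat_def supp_in_def)
    show "orth_to_M (M_to_orth m) = m"
      by (rule ext, rule nat_cases_12) (use m in \<open>simp_all add: M_to_orth_def orth_to_M_def\<close>)
  qed
  show "orth_to_M ` orth_compl (R_lat std_d4_root) \<subseteq> M_lat"
  proof
    fix y assume "y \<in> orth_to_M ` orth_compl (R_lat std_d4_root)"
    then obtain x where "x \<in> N_lat" "y = orth_to_M x" using orth_compl_std_d4_root_iff by blast
    then show "y \<in> M_lat" using N_latD(2) by (simp add: M_lat_def supp_in_def orth_to_M_def)
  qed
  show "M_to_orth ` M_lat \<subseteq> orth_compl (R_lat std_d4_root)"
    by (auto intro!: N_latI simp: orth_compl_std_d4_root_iff M_lat_def M_to_orth_def)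
qed

lemma orth_to_M_add:
  assumes "x \<in> orth_compl (R_lat std_d4_root)" "y \<in> orth_compl (R_lat std_d4_root)"
  shows "orth_to_M (\<lambda>i. x i + y i) = (\<lambda>i. orth_to_M x i + orth_to_M y i)"
proof -
  obtain a b where "x 10 = a + b" "x 11 = a - b" "orth_to_M x 8 = a" "orth_to_M x 9 = b"
    using orth_compl_std_d4_root_coords[OF assms(1)] .
  moreover obtain c d where "y 10 = c + d" "y 11 = c - d" "orth_to_M y 8 = c" "orth_to_M y 9 = d"
    using orth_compl_std_d4_root_coords[OF assms(2)] .
  ultimately show ?thesis by (auto simp: orth_to_M_def)
qed

lemma bM_expand: "bM u v = u 0 * v 1 + u 1 * v 0 + 2 * (u 2 * v 3 + u 3 * v 2)
     - (u 4 * v 4 + u 5 * v 5 + u 6 * v 6 + u 7 * v 7) - 2 * u 8 * v 8 - 2 * u 9 * v 9"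
  by (simp add: bM_def numeral_eq_Suc atLeastLessThanSuc algebra_simps)

lemma bM_orth_to_M:
  assumes "x \<in> orth_compl (R_lat std_d4_root)" "y \<in> orth_compl (R_lat std_d4_root)"
  shows "bM (orth_to_M x) (orth_to_M y) = bN x y"
proof -
  obtain a b where x: "x 10 = a + b" "x 11 = a - b" "orth_to_M x 8 = a" "orth_to_M x 9 = b"
    using orth_compl_std_d4_root_coords[OF assms(1)] .
  obtain c d where y: "y 10 = c + d" "y 11 = c - d" "orth_to_M y 8 = c" "orth_to_M y 9 = d"
    using orth_compl_std_d4_root_coords[OF assms(2)] .
  have "x 8 = 0" "x 9 = 0" "y 8 = 0" "y 9 = 0" using assms orth_compl_std_d4_root_iff by auto
  moreover have "orth_to_M u j = u j" if "j < 8" for u j using that by (simp add: orth_to_M_def)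
  ultimately show ?thesis
    unfolding bM_expand bN_expand x y by (simp add: algebra_simps)
qed

lemma orth_compl_iso_M:
  assumes r: "N_root r"
  shows "lattice_iso (orth_compl (R_lat r)) bN M_lat bM"
proof -
  obtain g where g: "rho_isometry g" "g r = std_root"
    using std_orbit_root[OF r] std_orbit_def by blast
  obtain g0 where g0: "rho_isometry g0" "g0 std_d4_root = std_root"
    using std_orbit_root[OF N_root_std_d4_root] std_orbit_def by blast
  let ?h = "inv_into N_lat g0 \<circ> g"
  have h: "rho_isometry ?h" using rho_isometry_comp[OF rho_isometry_inv[OF g0(1)] g(1)] .
  have "inv_into N_lat g0 (g0 std_d4_root) = std_d4_root"
    using rho_isometry_bij[OF g0(1)] N_root_std_d4_root by (simp add: bij_betw_inv_into_left N_root_def)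
  then have "?h r = std_d4_root" using g g0 by simp
  then have bij: "bij_betw ?h (orth_compl (R_lat r)) (orth_compl (R_lat std_d4_root))"
    using bij_betw_orth_compl_rho_isometry[OF h] r N_root_def by metis
  have sub: "orth_compl (R_lat r) \<subseteq> N_lat" using orth_compl_R_lat_iff by auto
  show ?thesis unfolding lattice_iso_def
  proof (intro exI[of _ "orth_to_M \<circ> ?h"] conjI ballI)
    show "bij_betw (orth_to_M \<circ> ?h) (orth_compl (R_lat r)) M_lat"
      using bij_betw_trans[OF bij bij_betw_orth_to_M] .
  next
    fix x y assume x: "x \<in> orth_compl (R_lat r)" and y: "y \<in> orth_compl (R_lat r)"
    have hxy: "?h x \<in> orth_compl (R_lat std_d4_root)" "?h y \<in> orth_compl (R_lat std_d4_root)"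
      using bij x y unfolding bij_betw_def by auto
    have "?h (\<lambda>i. x i + y i) = (\<lambda>i. ?h x i + ?h y i)"
      using rho_isometry_vadd[OF h] x y sub unfolding vadd_def by auto
    then show "(orth_to_M \<circ> ?h) (\<lambda>i. x i + y i) = (\<lambda>i. (orth_to_M \<circ> ?h) x i + (orth_to_M \<circ> ?h) y i)"
      using orth_to_M_add[OF hxy] by simp
    show "bM ((orth_to_M \<circ> ?h) x) ((orth_to_M \<circ> ?h) y) = bN x y"
      using bM_orth_to_M[OF hxy] rho_isometry_bN[OF h] x y sub by auto
  qed
qed

lemma N_root_gram:
  assumes "N_root r"
  shows "bN r r = -2" "bN (rho r) (rho r) = -2" "bN r (rho r) = 0" "bN (rho r) r = 0"
  using assms bN_rho_rho[of r r] bN_rho_self[of r] bN_sym[of r "rho r"] by (simp_all add: N_root_def)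

definition R_coords :: "(nat \<Rightarrow> int) \<Rightarrow> (nat \<Rightarrow> int) \<Rightarrow> (nat \<Rightarrow> int)" where
  "R_coords r y = (\<lambda>i. if i = 0 then (- bN y r) div 2 else if i = 1 then (- bN y (rho r)) div 2 else 0)"

lemma R_lat_iff: "y \<in> R_lat r \<longleftrightarrow> (\<exists>m n. y = (\<lambda>i. m * r i + n * rho r i))"
  unfolding R_lat_def by auto

lemma R_coords_lincomb:
  assumes "N_root r"
  shows "R_coords r (\<lambda>i. m * r i + n * rho r i) = (\<lambda>i. if i = 0 then m else if i = 1 then n else 0)"
  by (rule ext) (simp add: R_coords_def bN_lincomb_left N_root_gram[OF assms])

lemma bij_betw_R_coords:
  assumes r: "N_root r"
  shows "bij_betw (R_coords r) (R_lat r) A1A1_lat"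
proof (rule bij_betw_byWitness[where f' = "\<lambda>a i. a 0 * r i + a 1 * rho r i"])
  show "\<forall>y\<in>R_lat r. (\<lambda>i. R_coords r y 0 * r i + R_coords r y 1 * rho r i) = y"
    using R_coords_lincomb[OF r] by (auto simp: R_lat_iff)
  show "\<forall>a\<in>A1A1_lat. R_coords r (\<lambda>i. a 0 * r i + a 1 * rho r i) = a"
  proof
    fix a assume "a \<in> A1A1_lat"
    then have "a i = 0" if "i \<noteq> 0" "i \<noteq> 1" for i using that by (auto simp: A1A1_lat_def supp_in_def)
    then show "R_coords r (\<lambda>i. a 0 * r i + a 1 * rho r i) = a"
      unfolding R_coords_lincomb[OF r] by (auto simp: fun_eq_iff)
  qed
  show "R_coords r ` R_lat r \<subseteq> A1A1_lat"
    using R_coords_lincomb[OF r] by (auto simp: R_lat_iff A1A1_lat_def supp_in_def)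
  show "(\<lambda>a i. a 0 * r i + a 1 * rho r i) ` A1A1_lat \<subseteq> R_lat r"
    using R_lat_iff by blast
qed

lemma R_lat_iso_A1A1:
  assumes r: "N_root r"
  shows "lattice_iso (R_lat r) bN A1A1_lat bA1A1"
  unfolding lattice_iso_def
proof (intro exI[of _ "R_coords r"] conjI ballI)
  show "bij_betw (R_coords r) (R_lat r) A1A1_lat" using bij_betw_R_coords[OF r] .
  fix x y assume "x \<in> R_lat r" "y \<in> R_lat r"
  then obtain m n m' n' where xy: "x = (\<lambda>i. m * r i + n * rho r i)" "y = (\<lambda>i. m' * r i + n' * rho r i)"
    unfolding R_lat_iff by blast
  have "(\<lambda>i. x i + y i) = (\<lambda>i. (m + m') * r i + (n + n') * rho r i)"
    unfolding xy by (simp add: algebra_simps)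
  then show "R_coords r (\<lambda>i. x i + y i) = (\<lambda>i. R_coords r x i + R_coords r y i)"
    by (simp add: xy R_coords_lincomb[OF r] fun_eq_iff)
  show "bA1A1 (R_coords r x) (R_coords r y) = bN x y"
    unfolding xy R_coords_lincomb[OF r]
    by (simp add: bA1A1_def bN_lincomb_left bN_lincomb_right N_root_gram[OF r] algebra_simps)
qed

lemma bN_add_rho_even:
  assumes r: "r \<in> N_lat" and x: "x \<in> N_lat"
  shows "even (bN (vadd r (rho r)) x)"
proof -
  from N_latD(2)[OF r] obtain s1 where "r 4 + r 5 + r 6 + r 7 = 2 * s1" by (rule evenE)
  then have r7: "r 7 = 2 * s1 - r 4 - r 5 - r 6" by simp
  from N_latD(3)[OF r] obtain s2 where "r 8 + r 9 + r 10 + r 11 = 2 * s2" by (rule evenE)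
  then have r11: "r 11 = 2 * s2 - r 8 - r 9 - r 10" by simp
  from N_latD(2)[OF x] obtain t1 where "x 4 + x 5 + x 6 + x 7 = 2 * t1" by (rule evenE)
  then have x7: "x 7 = 2 * t1 - x 4 - x 5 - x 6" by simp
  from N_latD(3)[OF x] obtain t2 where "x 8 + x 9 + x 10 + x 11 = 2 * t2" by (rule evenE)
  then have x11: "x 11 = 2 * t2 - x 8 - x 9 - x 10" by simp
  have "bN (vadd r (rho r)) x = 2 * (r 2 * x 1 + (r 1 + r 3) * x 0 + (2 * r 2 - r 0) * x 3 - r 1 * x 2
     - ((r 4 + r 5) * (x 4 + x 5) - r 4 * x 5 + 2 * s1 * t1 - s1 * (x 4 + x 5) - (r 4 + r 5) * t1 - r 6 * x 7)
     - ((r 8 + r 9) * (x 8 + x 9) - r 8 * x 9 + 2 * s2 * t2 - s2 * (x 8 + x 9) - (r 8 + r 9) * t2 - r 10 * x 11))"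
    unfolding bN_expand vadd_def rho_def by (simp add: r7 r11 x7 x11 algebra_simps)
  then show ?thesis by simp
qed

lemma half_add_rho_in_N_dual:
  assumes r: "r \<in> N_lat"
  shows "(\<lambda>i. (of_int (r i + rho r i) :: rat) / 2) \<in> N_dual"
  unfolding N_dual_def
proof (intro CollectI conjI ballI)
  show "supp_in 12 (\<lambda>i. (of_int (r i + rho r i) :: rat) / 2)"
    unfolding supp_in_def using N_latD(1)[OF r] by (simp add: rho_def)
  fix x assume x: "x \<in> N_lat"
  obtain k where k: "bN (vadd r (rho r)) x = 2 * k" using bN_add_rho_even[OF r x] by (rule evenE)
  have "bN (\<lambda>i. (of_int (r i + rho r i) :: rat) / 2) (\<lambda>i. of_int (x i)) = of_int (bN (vadd r (rho r)) x) / 2"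
    by (simp add: bN_expand vadd_def field_simps)
  also have "\<dots> = of_int k" using k by simp
  finally show "bN (\<lambda>i. (of_int (r i + rho r i) :: rat) / 2) (\<lambda>i. of_int (x i)) \<in> \<int>" by simp
qed

theorem lemma4p2:
  fixes r :: "nat \<Rightarrow> int"
  assumes "r \<in> N_lat" and "bN r r = -2"
  shows "lattice_iso (R_lat r) bN A1A1_lat bA1A1
       \<and> lattice_iso (orth_compl (R_lat r)) bN M_lat bM
       \<and> (\<lambda>i. (of_int (r i + rho r i) :: rat) / 2) \<in> N_dual"
proof -
  have "N_root r" using assms N_root_def by simp
  then show ?thesis using R_lat_iso_A1A1 orth_compl_iso_M half_add_rho_in_N_dual[OF assms(1)] by simp
qed

end
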